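(* Let $G$ be a finite simple unmixed graph without isolated vertices and let $I_c(G)$ be its ideal of covers. If the graph $\mathcal{G}_{I_c(G)}$ is connected, then (a) $G$ has no duplicated vertices, and (b) every $4$-cycle of $G$ has an edge that does not satisfy the (P) property.
   Context: $G$ is unmixed if all minimal vertex covers (inclusion-minimal vertex sets meeting every edge) have equal size. $I_c(G)$ is generated by $\prod_{t\in C}t$ over minimal vertex covers $C$. With minimal vertex covers $C_1,\dots,C_r$, $\mathcal{G}_{I_c(G)}$ has vertex set $\{C_1,\ldots,C_r\}$ and $\{C_i,C_j\}$ ($i\ne j$) is an edge iff $|C_i\cup C_j|=|C_i|+1$. Two distinct vertices $t,t'$ are duplicated if $N_G(t)=N_G(t')$. An edge $e=\{t_1,t_2\}$ has the (P) property if for all edges $\{t_1,t_1'\}$ and $\{t_2,t_2'\}$ distinct from $e$, $\{t_1',t_2'\}$ is an edge of $G$. *)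

theory Defs
  imports Main
begin

definition simple_graph :: "'a set \<Rightarrow> 'a set set \<Rightarrow> bool" where
  "simple_graph V E \<longleftrightarrow> finite V \<and> (\<forall>e\<in>E. e \<subseteq> V \<and> card e = 2)"

definition no_isolated_vertices :: "'a set \<Rightarrow> 'a set set \<Rightarrow> bool" where
  "no_isolated_vertices V E \<longleftrightarrow> (\<forall>v\<in>V. \<exists>e\<in>E. v \<in> e)"

definition vertex_cover :: "'a set \<Rightarrow> 'a set set \<Rightarrow> 'a set \<Rightarrow> bool" where
  "vertex_cover V E C \<longleftrightarrow> C \<subseteq> V \<and> (\<forall>e\<in>E. e \<inter> C \<noteq> {})"

definition minimal_vertex_cover :: "'a set \<Rightarrow> 'a set set \<Rightarrow> 'a set \<Rightarrow> bool" where
  "minimal_vertex_cover V E C \<longleftrightarrow>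
     vertex_cover V E C \<and> (\<forall>D. D \<subset> C \<longrightarrow> \<not> vertex_cover V E D)"

definition unmixed :: "'a set \<Rightarrow> 'a set set \<Rightarrow> bool" where
  "unmixed V E \<longleftrightarrow> (\<forall>C D. minimal_vertex_cover V E C \<and> minimal_vertex_cover V E D
                        \<longrightarrow> card C = card D)"

text \<open>Edge relation of the graph G_{I_c(G)}: its vertices are the minimal vertex covers
  (equivalently, the squarefree monomial generators of the ideal of covers I_c(G)),
  and C_i, C_j (i \<noteq> j) are adjacent iff |C_i \<union> C_j| = |C_i| + 1.\<close>
definition cover_graph_adj :: "'a set \<Rightarrow> 'a set set \<Rightarrow> 'a set \<Rightarrow> 'a set \<Rightarrow> bool" where
  "cover_graph_adj V E C D \<longleftrightarrow>
     minimal_vertex_cover V E C \<and> minimal_vertex_cover V E D \<and> C \<noteq> D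
     \<and> card (C \<union> D) = card C + 1"

definition cover_graph_connected :: "'a set \<Rightarrow> 'a set set \<Rightarrow> bool" where
  "cover_graph_connected V E \<longleftrightarrow>
     (\<forall>C D. minimal_vertex_cover V E C \<and> minimal_vertex_cover V E D
        \<longrightarrow> (cover_graph_adj V E)\<^sup>*\<^sup>* C D)"

definition nbhd :: "'a set set \<Rightarrow> 'a \<Rightarrow> 'a set" where
  "nbhd E t = {u. {t, u} \<in> E}"

definition duplicated :: "'a set \<Rightarrow> 'a set set \<Rightarrow> 'a \<Rightarrow> 'a \<Rightarrow> bool" where
  "duplicated V E t t' \<longleftrightarrow> t \<in> V \<and> t' \<in> V \<and> t \<noteq> t' \<and> nbhd E t = nbhd E t'"

definition P_property :: "'a set set \<Rightarrow> 'a \<Rightarrow> 'a \<Rightarrow> bool" where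
  "P_property E t1 t2 \<longleftrightarrow>
     (\<forall>t1' t2'. {t1, t1'} \<in> E \<and> {t2, t2'} \<in> E \<and> {t1, t1'} \<noteq> {t1, t2} \<and> {t2, t2'} \<noteq> {t1, t2}
        \<longrightarrow> {t1', t2'} \<in> E)"

definition four_cycle :: "'a set set \<Rightarrow> 'a \<Rightarrow> 'a \<Rightarrow> 'a \<Rightarrow> 'a \<Rightarrow> bool" where
  "four_cycle E a b c d \<longleftrightarrow> distinct [a, b, c, d]
     \<and> {a, b} \<in> E \<and> {b, c} \<in> E \<and> {c, d} \<in> E \<and> {d, a} \<in> E"

end

theory Submission
  imports Defs
begin

text \<open>In an unmixed graph, covers adjacent in the cover graph have equal size and a union one
  larger, so they differ in exactly one vertex. Walking along a path of the connected cover graph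
  from a minimal cover containing a vertex t to one avoiding t, some single step therefore drops t
  and nothing else. Hence no two distinct vertices t, t' can be cover-equivalent, i.e. lie in
  exactly the same minimal covers. Duplicated vertices are cover-equivalent, because every vertex
  of a minimal cover has a neighbour outside it. So are a and c in a 4-cycle a-b-c-d whose edges
  ab and bc have the (P) property: a minimal cover containing both ends of a (P) edge would
  contain an edge between their outside neighbours, so it contains exactly one end of ab and of bc.\<close>

definition cover_equivalent :: "'a set \<Rightarrow> 'a set set \<Rightarrow> 'a \<Rightarrow> 'a \<Rightarrow> bool" where
  "cover_equivalent V E t t' \<longleftrightarrow> (\<forall>C. minimal_vertex_cover V E C \<longrightarrow> (t \<in> C \<longleftrightarrow> t' \<in> C))"

lemma rtranclp_crossing_step:
  assumes "R\<^sup>*\<^sup>* x y" "P x" "\<not> P y"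
  shows "\<exists>u v. R u v \<and> P u \<and> \<not> P v"
  using assms by (induction rule: rtranclp_induct) auto

lemma simple_graph_edgeE:
  assumes "simple_graph V E" "e \<in> E"
  obtains x y where "e = {x, y}" "x \<noteq> y"
  using assms unfolding simple_graph_def by (meson card_2_iff)

lemma simple_graph_edge_at:
  assumes "simple_graph V E" "e \<in> E" "t \<in> e"
  obtains u where "e = {t, u}" "u \<noteq> t"
proof -
  obtain x y where e: "e = {x, y}" "x \<noteq> y" using assms(1,2) by (rule simple_graph_edgeE)
  with assms(3) have "t = x \<or> t = y" by blast
  with e that show ?thesis by (metis insert_commute)
qed

lemma minimal_vertex_cover_meets_edge:
  assumes "minimal_vertex_cover V E C" "{a, b} \<in> E"
  shows "a \<in> C \<or> b \<in> C"
proof -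
  have "\<forall>e\<in>E. e \<inter> C \<noteq> {}" using assms(1) unfolding minimal_vertex_cover_def vertex_cover_def by simp
  then have "{a, b} \<inter> C \<noteq> {}" using assms(2) by (rule bspec)
  then show ?thesis by blast
qed

lemma minimal_vertex_cover_finite:
  assumes "simple_graph V E" "minimal_vertex_cover V E C"
  shows "finite C"
proof (rule finite_subset)
  show "C \<subseteq> V" using assms(2) unfolding minimal_vertex_cover_def vertex_cover_def by blast
  show "finite V" using assms(1) unfolding simple_graph_def by blast
qed

lemma vertex_cover_has_minimal_subcover:
  assumes "finite X" "vertex_cover V E X"
  obtains D where "D \<subseteq> X" "minimal_vertex_cover V E D"
proof -
  let ?covers = "{D. D \<subseteq> X \<and> vertex_cover V E D}"
  have "?covers \<subseteq> Pow X" by blast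
  then have "finite ?covers" using assms(1) finite_subset by blast
  moreover have "X \<in> ?covers" using assms(2) by simp
  ultimately obtain D where D: "D \<in> ?covers" and least: "\<forall>D'\<in>?covers. D' \<le> D \<longrightarrow> D = D'"
    by (metis (no_types, lifting) finite_has_minimal2)
  have "\<not> vertex_cover V E D'" if "D' \<subset> D" for D'
    using that D least by blast
  with D have "minimal_vertex_cover V E D" unfolding minimal_vertex_cover_def by blast
  with D show ?thesis using that by blast
qed

lemma vertex_cover_delete_vertex:
  assumes "simple_graph V E"
  shows "vertex_cover V E (V - {u})"
  unfolding vertex_cover_def
proof safe
  fix e assume "e \<in> E" "e \<inter> (V - {u}) = {}"
  moreover from assms \<open>e \<in> E\<close> obtain x y where "e = {x, y}" "x \<noteq> y"
    by (rule simple_graph_edgeE)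
  moreover have "e \<subseteq> V" using assms \<open>e \<in> E\<close> unfolding simple_graph_def by blast
  ultimately show False by blast
qed

lemma minimal_vertex_cover_avoiding:
  assumes "simple_graph V E"
  obtains C where "minimal_vertex_cover V E C" "u \<notin> C"
proof -
  have "finite (V - {u})" using assms unfolding simple_graph_def by simp
  then obtain C where "C \<subseteq> V - {u}" "minimal_vertex_cover V E C"
    using vertex_cover_delete_vertex[OF assms] by (rule vertex_cover_has_minimal_subcover)
  with that show ?thesis by blast
qed

lemma minimal_vertex_cover_containing:
  assumes "simple_graph V E" "{t, u} \<in> E"
  obtains C where "minimal_vertex_cover V E C" "t \<in> C"
proof -
  obtain C where "minimal_vertex_cover V E C" "u \<notin> C"
    using assms(1) by (rule minimal_vertex_cover_avoiding)
  then show ?thesis using minimal_vertex_cover_meets_edge[OF _ assms(2)] that by blast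
qed

lemma minimal_vertex_cover_private_neighbour:
  assumes "simple_graph V E" "minimal_vertex_cover V E C" "t \<in> C"
  obtains u where "{t, u} \<in> E" "u \<notin> C"
proof -
  have "C - {t} \<subset> C" using assms(3) by blast
  then have "\<not> vertex_cover V E (C - {t})"
    using assms(2) unfolding minimal_vertex_cover_def by blast
  moreover have "C - {t} \<subseteq> V"
    using assms(2) unfolding minimal_vertex_cover_def vertex_cover_def by blast
  ultimately obtain e where e: "e \<in> E" "e \<inter> (C - {t}) = {}"
    unfolding vertex_cover_def by blast
  moreover have "e \<inter> C \<noteq> {}"
    using assms(2) e(1) unfolding minimal_vertex_cover_def vertex_cover_def by blast
  ultimately have "t \<in> e" by blast
  with assms(1) e(1) obtain u where "e = {t, u}" "u \<noteq> t" by (rule simple_graph_edge_at)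
  with e that show ?thesis by blast
qed

lemma unmixed_cover_graph_adj_card_diff:
  assumes "simple_graph V E" "unmixed V E" "cover_graph_adj V E X Y"
  shows "card (X - Y) = 1"
proof -
  have X: "minimal_vertex_cover V E X" and Y: "minimal_vertex_cover V E Y"
    and card_Un: "card (X \<union> Y) = card X + 1"
    using assms(3) unfolding cover_graph_adj_def by auto
  have "finite X" "finite Y"
    using minimal_vertex_cover_finite[OF assms(1)] X Y by auto
  then have "card (X \<union> Y) = card Y + card (X - Y)"
    by (metis Un_Diff_cancel2 Un_commute card_Un_disjoint Diff_disjoint finite_Diff)
  moreover have "card X = card Y" using assms(2) X Y unfolding unmixed_def by blast
  ultimately show ?thesis using card_Un by simp
qed

lemma connected_unmixed_not_cover_equivalent:
  assumes sg: "simple_graph V E" and "unmixed V E" "cover_graph_connected V E"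
    and "{t, u} \<in> E" "t \<noteq> t'"
  shows "\<not> cover_equivalent V E t t'"
proof
  assume equiv: "cover_equivalent V E t t'"
  obtain C1 where C1: "minimal_vertex_cover V E C1" "t \<in> C1"
    using sg \<open>{t, u} \<in> E\<close> by (rule minimal_vertex_cover_containing)
  obtain C2 where C2: "minimal_vertex_cover V E C2" "t \<notin> C2"
    using sg by (rule minimal_vertex_cover_avoiding)
  have "(cover_graph_adj V E)\<^sup>*\<^sup>* C1 C2"
    using assms(3) C1 C2 unfolding cover_graph_connected_def by blast
  then obtain X Y where XY: "cover_graph_adj V E X Y" "t \<in> X" "t \<notin> Y"
    using rtranclp_crossing_step[where P = "\<lambda>X. t \<in> X"] C1 C2 by blast
  then have "t' \<in> X" "t' \<notin> Y"
    using equiv unfolding cover_equivalent_def cover_graph_adj_def by auto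
  with XY have "{t, t'} \<subseteq> X - Y" by blast
  moreover have "finite (X - Y)"
    using XY(1) minimal_vertex_cover_finite[OF sg] unfolding cover_graph_adj_def by blast
  ultimately have "card {t, t'} \<le> card (X - Y)" by (rule card_mono[rotated])
  with unmixed_cover_graph_adj_card_diff[OF sg assms(2) XY(1)] \<open>t \<noteq> t'\<close> show False by simp
qed

lemma same_nbhd_cover_equivalent:
  assumes sg: "simple_graph V E" and "nbhd E t = nbhd E t'"
  shows "cover_equivalent V E t t'"
proof -
  have nb: "{t, v} \<in> E \<longleftrightarrow> {t', v} \<in> E" for v
    using assms(2) unfolding nbhd_def by blast
  have "s' \<in> C"
    if C: "minimal_vertex_cover V E C" and "s \<in> C" and same: "\<forall>v. {s, v} \<in> E \<longleftrightarrow> {s', v} \<in> E"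
    for C s s'
  proof -
    obtain v where "{s, v} \<in> E" "v \<notin> C"
      using sg C \<open>s \<in> C\<close> by (rule minimal_vertex_cover_private_neighbour)
    then show ?thesis using minimal_vertex_cover_meets_edge[OF C, of s' v] same by blast
  qed
  with nb show ?thesis unfolding cover_equivalent_def by metis
qed

lemma P_property_minimal_vertex_cover_one_end:
  assumes sg: "simple_graph V E" and P: "P_property E a b" and ab: "{a, b} \<in> E"
    and C: "minimal_vertex_cover V E C"
  shows "a \<in> C \<longleftrightarrow> b \<notin> C"
proof -
  have "\<not> (a \<in> C \<and> b \<in> C)"
  proof
    assume both: "a \<in> C \<and> b \<in> C"
    then obtain a' where a': "{a, a'} \<in> E" "a' \<notin> C"
      using minimal_vertex_cover_private_neighbour[OF sg C] by blast
    obtain b' where b': "{b, b'} \<in> E" "b' \<notin> C"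
      using both minimal_vertex_cover_private_neighbour[OF sg C] by blast
    have "{a, a'} \<noteq> {a, b}" "{b, b'} \<noteq> {a, b}"
      using both a'(2) b'(2) by (auto simp: doubleton_eq_iff)
    with a'(1) b'(1) have "{a', b'} \<in> E" using P unfolding P_property_def by blast
    then show False using minimal_vertex_cover_meets_edge[OF C] a'(2) b'(2) by blast
  qed
  then show ?thesis using minimal_vertex_cover_meets_edge[OF C ab] by blast
qed

lemma P_property_path_cover_equivalent:
  assumes "simple_graph V E" "P_property E a b" "P_property E b c" "{a, b} \<in> E" "{b, c} \<in> E"
  shows "cover_equivalent V E a c"
  using P_property_minimal_vertex_cover_one_end[OF assms(1,2,4)]
    P_property_minimal_vertex_cover_one_end[OF assms(1,3,5)]
  unfolding cover_equivalent_def by blast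

theorem theorem5p4:
  fixes V :: "'a set" and E :: "'a set set"
  assumes "simple_graph V E"
    and "unmixed V E"
    and "no_isolated_vertices V E"
    and "cover_graph_connected V E"
  shows "(\<forall>t t'. \<not> duplicated V E t t')
    \<and> (\<forall>a b c d. four_cycle E a b c d \<longrightarrow>
          \<not> P_property E a b \<or> \<not> P_property E b c \<or> \<not> P_property E c d \<or> \<not> P_property E d a)"
proof -
  note not_equiv = connected_unmixed_not_cover_equivalent[OF assms(1,2,4)]
  have "\<not> duplicated V E t t'" for t t'
  proof
    assume "duplicated V E t t'"
    then have "t \<in> V" "t \<noteq> t'" "cover_equivalent V E t t'"
      using same_nbhd_cover_equivalent[OF assms(1)] unfolding duplicated_def by auto
    moreover obtain e where "e \<in> E" "t \<in> e"
      using assms(3) \<open>t \<in> V\<close> unfolding no_isolated_vertices_def by blast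
    moreover from assms(1) this obtain u where "{t, u} \<in> E"
      by (metis simple_graph_edge_at)
    ultimately show False using not_equiv by blast
  qed
  moreover have "\<not> (P_property E a b \<and> P_property E b c)" if "four_cycle E a b c d" for a b c d
  proof -
    from that have "{a, b} \<in> E" "{b, c} \<in> E" "a \<noteq> c" unfolding four_cycle_def by auto
    then show ?thesis using P_property_path_cover_equivalent[OF assms(1)] not_equiv by blast
  qed
  ultimately show ?thesis by blast
qed

end
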